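(* Let $F:\mathbb C^n\to\mathbb C^n$ be a square system of polynomials with real coefficients and let $I\in\mathbb{IC}^n$ be a strong interval approximate zero of $F$. Then there exist $x\in I$ and $Y\in\mathbb C^{n\times n}$ invertible with $K_{x,Y}(I)\subset I$ and $\sqrt2\,\lVert\mathbf 1_n-Y\cdot\square\mathrm JF(I)\rVert_\infty<1$. If additionally $\{\bar z: z\in K_{x,Y}(I)\}\subset I$ (complex conjugation taken entrywise), then the unique zero of $F$ contained in $I$ is real.
   Context: $\mathbb{IR}$ is the set of compact real intervals $[a,b]$, with operations $X\circ Y=\{x\circ y: x\in X,y\in Y\}$ for $\circ\in\{+,-,\cdot,/\}$ ($0\notin Y$ for division). $\mathbb{IC}=\{X+iY: X,Y\in\mathbb{IR}\}$ is the set of rectangular complex intervals, where $X+iY=\{x+iy:x\in X,y\in Y\}$, with operations defined for $I=X+iY$, $J=W+iZ$ by $I\pm J=(X\pm W)+i(Y\pm Z)$, $I\cdot J=(X W-YZ)+i(XZ+YW)$, $I/J=\frac{XW+YZ}{WW+ZZ}+i\frac{YW-XZ}{WW+ZZ}$. Operations on $\mathbb{IC}^n$ are componentwise; for an interval matrix $A=(A_{i,j})\in\mathbb{IC}^{n\times n}$ and $I\in\mathbb{IC}^n$, $A\cdot I:=\sum_{j=1}^n I_j\cdot(A_{1,j},\dots,A_{n,j})^T$. A point $x\in\mathbb C^n$ is identified with the degenerate interval vector $[\mathrm{Re}\,x,\mathrm{Re}\,x]+i[\mathrm{Im}\,x,\mathrm{Im}\,x]$. An interval enclosure of a map $F:\mathbb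 C^n\to\mathbb C^m$ is a map $\square F:\mathbb{IC}^n\to\mathbb{IC}^m$ with $\{F(x):x\in I\}\subseteq\square F(I)$ for all $I$; $\square F$ and $\square\mathrm JF$ denote fixed interval enclosures of $F$ and of its Jacobian $\mathrm JF$. For $A\in\mathbb{IC}^{n\times n}$, $\lVert A\rVert_\infty:=\max_{B\in A}\max_{v\ne0}\lVert Bv\rVert_\infty/\lVert v\rVert_\infty$ with $\lVert v\rVert_\infty=\max_i|v_i|$. The Krawczyk operator is $K_{x,Y}(I):=x-Y\cdot\square F(x)+(\mathbf 1_n-Y\cdot\square\mathrm JF(I))(I-x)$ for $I\in\mathbb{IC}^n$, $x\in\mathbb C^n$, $Y\in\mathbb C^{n\times n}$ invertible. $I$ is a strong interval approximate zero of $F$ if there exist $x\in I$ and invertible $Y$ with $K_{x,Y}(I)\subset I$ and $\sqrt2\,\lVert\mathbf 1_n-Y\cdot\square\mathrm JF(I)\rVert_\infty<1$; such an $I$ contains exactly one zero of $F$ (its associated zero). *)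

theory Defs
  imports "HOL-Analysis.Analysis"
begin

type_synonym rint = "real set"

definition is_rint :: "rint \<Rightarrow> bool" where
  "is_rint X \<longleftrightarrow> (\<exists>a b. a \<le> b \<and> X = {a..b})"

definition radd :: "rint \<Rightarrow> rint \<Rightarrow> rint" where
  "radd X Y = {x + y | x y. x \<in> X \<and> y \<in> Y}"
definition rsub :: "rint \<Rightarrow> rint \<Rightarrow> rint" where
  "rsub X Y = {x - y | x y. x \<in> X \<and> y \<in> Y}"
definition rmul :: "rint \<Rightarrow> rint \<Rightarrow> rint" where
  "rmul X Y = {x * y | x y. x \<in> X \<and> y \<in> Y}"
definition rdiv :: "rint \<Rightarrow> rint \<Rightarrow> rint" where
  "rdiv X Y = {x / y | x y. x \<in> X \<and> y \<in> Y}"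

definition rsum :: "('j::finite \<Rightarrow> rint) \<Rightarrow> rint" where
  "rsum X = {(\<Sum>j\<in>UNIV. x j) | x. \<forall>j. x j \<in> X j}"

type_synonym cint = "rint \<times> rint"

definition is_cint :: "cint \<Rightarrow> bool" where
  "is_cint I \<longleftrightarrow> is_rint (fst I) \<and> is_rint (snd I)"

definition cset :: "cint \<Rightarrow> complex set" where
  "cset I = {Complex x y | x y. x \<in> fst I \<and> y \<in> snd I}"

definition pt :: "complex \<Rightarrow> cint" where
  "pt c = ({Re c}, {Im c})"

definition cadd :: "cint \<Rightarrow> cint \<Rightarrow> cint" where
  "cadd I J = (radd (fst I) (fst J), radd (snd I) (snd J))"
definition csub :: "cint \<Rightarrow> cint \<Rightarrow> cint" where
  "csub I J = (rsub (fst I) (fst J), rsub (snd I) (snd J))"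
definition cmul :: "cint \<Rightarrow> cint \<Rightarrow> cint" where
  "cmul I J = (let X = fst I; Y = snd I; W = fst J; Z = snd J in
     (rsub (rmul X W) (rmul Y Z), radd (rmul X Z) (rmul Y W)))"
definition cdiv :: "cint \<Rightarrow> cint \<Rightarrow> cint" where
  "cdiv I J = (let X = fst I; Y = snd I; W = fst J; Z = snd J;
                   D = radd (rmul W W) (rmul Z Z) in
     (rdiv (radd (rmul X W) (rmul Y Z)) D, rdiv (rsub (rmul Y W) (rmul X Z)) D))"

definition csum :: "('j::finite \<Rightarrow> cint) \<Rightarrow> cint" where
  "csum f = (rsum (\<lambda>j. fst (f j)), rsum (\<lambda>j. snd (f j)))"

definition is_civec :: "cint^'n \<Rightarrow> bool" where
  "is_civec I \<longleftrightarrow> (\<forall>i. is_cint (I$i))"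

definition is_cimat :: "cint^'n^'m \<Rightarrow> bool" where
  "is_cimat A \<longleftrightarrow> (\<forall>i j. is_cint (A$i$j))"

definition vset :: "cint^'n \<Rightarrow> (complex^'n) set" where
  "vset I = {z. \<forall>i. z$i \<in> cset (I$i)}"

definition mset :: "cint^'n^'m \<Rightarrow> (complex^'n^'m) set" where
  "mset A = {B. \<forall>i j. B$i$j \<in> cset (A$i$j)}"

definition pvec :: "complex^'n \<Rightarrow> cint^'n" where
  "pvec x = (\<chi> i. pt (x$i))"

definition pmat :: "complex^'n^'m \<Rightarrow> cint^'n^'m" where
  "pmat Y = (\<chi> i j. pt (Y$i$j))"

definition vadd :: "cint^'n \<Rightarrow> cint^'n \<Rightarrow> cint^'n" where
  "vadd I J = (\<chi> i. cadd (I$i) (J$i))"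
definition vsub :: "cint^'n \<Rightarrow> cint^'n \<Rightarrow> cint^'n" where
  "vsub I J = (\<chi> i. csub (I$i) (J$i))"
definition msub :: "cint^'n^'m \<Rightarrow> cint^'n^'m \<Rightarrow> cint^'n^'m" where
  "msub A B = (\<chi> i j. csub (A$i$j) (B$i$j))"

text \<open>A \<cdot> I := \<Sum>_j I_j \<cdot> (A_{1,j},...,A_{n,j})^T.\<close>
definition matvec :: "cint^'n^'m \<Rightarrow> cint^'n \<Rightarrow> cint^'m" where
  "matvec A I = (\<chi> i. csum (\<lambda>j. cmul (I$j) (A$i$j)))"

definition matmul :: "cint^'k^'m \<Rightarrow> cint^'n^'k \<Rightarrow> cint^'n^'m" where
  "matmul A M = (\<chi> i l. csum (\<lambda>j. cmul (M$j$l) (A$i$j)))"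

definition vnorm_inf :: "complex^'n \<Rightarrow> real" where
  "vnorm_inf v = Max (range (\<lambda>i. cmod (v$i)))"

definition opnorm_inf :: "complex^'n^'n \<Rightarrow> real" where
  "opnorm_inf B = Sup {vnorm_inf (B *v v) / vnorm_inf v | v. v \<noteq> 0}"

definition inorm_inf :: "cint^'n^'n \<Rightarrow> real" where
  "inorm_inf A = Sup {opnorm_inf B | B. B \<in> mset A}"

definition real_poly_system :: "(complex^'n \<Rightarrow> complex^'n) \<Rightarrow> bool" where
  "real_poly_system F \<longleftrightarrow> (\<forall>i. \<exists>S c. finite S \<and>
     (\<forall>z. F z $ i = (\<Sum>\<alpha>\<in>S. of_real (c \<alpha>) * (\<Prod>j\<in>UNIV. (z$j) ^ (\<alpha> j)))))"

definition jac :: "(complex^'n \<Rightarrow> complex^'m) \<Rightarrow> complex^'n \<Rightarrow> complex^'n^'m" where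
  "jac F z = (\<chi> i j. deriv (\<lambda>t. F (z + t *s axis j 1) $ i) 0)"

definition is_enclosure :: "(cint^'n \<Rightarrow> cint^'m) \<Rightarrow> (complex^'n \<Rightarrow> complex^'m) \<Rightarrow> bool" where
  "is_enclosure bF F \<longleftrightarrow> (\<forall>I. is_civec I \<longrightarrow> is_civec (bF I) \<and> F ` vset I \<subseteq> vset (bF I))"

definition is_mat_enclosure ::
  "(cint^'n \<Rightarrow> cint^'k^'m) \<Rightarrow> (complex^'n \<Rightarrow> complex^'k^'m) \<Rightarrow> bool" where
  "is_mat_enclosure bJ J \<longleftrightarrow> (\<forall>I. is_civec I \<longrightarrow> is_cimat (bJ I) \<and> J ` vset I \<subseteq> mset (bJ I))"

definition krawczyk ::
  "(cint^'n \<Rightarrow> cint^'n) \<Rightarrow> (cint^'n \<Rightarrow> cint^'n^'n) \<Rightarrow> complex^'n \<Rightarrow> complex^'n^'n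
     \<Rightarrow> cint^'n \<Rightarrow> cint^'n" where
  "krawczyk bF bJ x Y I =
     vadd (vsub (pvec x) (matvec (pmat Y) (bF (pvec x))))
          (matvec (msub (pmat (mat 1)) (matmul (pmat Y) (bJ I))) (vsub I (pvec x)))"

definition strong_iaz ::
  "(cint^'n \<Rightarrow> cint^'n) \<Rightarrow> (cint^'n \<Rightarrow> cint^'n^'n) \<Rightarrow> cint^'n \<Rightarrow> bool" where
  "strong_iaz bF bJ I \<longleftrightarrow> is_civec I \<and>
     (\<exists>x Y. x \<in> vset I \<and> invertible Y \<and>
        vset (krawczyk bF bJ x Y I) \<subseteq> vset I \<and>
        sqrt 2 * inorm_inf (msub (pmat (mat 1)) (matmul (pmat Y) (bJ I))) < 1)"

end

theory Submission
  imports Defs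
begin

text \<open>
  The Newton-type map \<open>g z = z - Y F(z)\<close> sends \<open>I\<close> into \<open>K(I)\<close>: the mean value
  theorem holds only for real-valued functions, so it is applied separately to the real and the
  imaginary part of each component of \<open>g\<close>; each part then agrees with the corresponding part
  of some element of \<open>K(I)\<close>, and a rectangular interval is the product of such
  parts. Brouwer's fixed point theorem gives a fixed point of \<open>g\<close>, i.e. a zero \<open>z\<close> of \<open>F\<close>
  in \<open>K(I)\<close>. The same splitting shows that \<open>g\<close> is a contraction on \<open>I\<close> with factor
  \<open>\<surd>2 \<parallel>1 - Y JF(I)\<parallel>\<close> (the \<open>\<surd>2\<close> comes from recombining real and imaginary parts), so \<open>z\<close>
  is the only zero in \<open>I\<close>. As \<open>F\<close> has real coefficients, the conjugate of \<open>z\<close> is again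
  a zero, and it lies in \<open>I\<close> by hypothesis; hence it equals \<open>z\<close>.
\<close>

section \<open>Interval arithmetic\<close>

lemma mem_cset_iff: "z \<in> cset I \<longleftrightarrow> Re z \<in> fst I \<and> Im z \<in> snd I"
  unfolding cset_def by (auto intro!: exI[of _ "Re z"] exI[of _ "Im z"] simp: complex_eq_iff)

lemma pt_mem: "c \<in> cset (pt c)"
  by (simp add: mem_cset_iff pt_def)

lemma cadd_mem: "a \<in> cset I \<Longrightarrow> b \<in> cset J \<Longrightarrow> a + b \<in> cset (cadd I J)"
  by (auto simp: mem_cset_iff cadd_def radd_def)

lemma csub_mem: "a \<in> cset I \<Longrightarrow> b \<in> cset J \<Longrightarrow> a - b \<in> cset (csub I J)"
  by (auto simp: mem_cset_iff csub_def rsub_def)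

lemma cmul_mem: "a \<in> cset I \<Longrightarrow> b \<in> cset J \<Longrightarrow> a * b \<in> cset (cmul I J)"
  by (auto simp: mem_cset_iff cmul_def rsub_def radd_def rmul_def Let_def)

lemma rsum_mem: "(\<And>j. x j \<in> X j) \<Longrightarrow> (\<Sum>j\<in>UNIV. x j) \<in> rsum X"
  unfolding rsum_def by blast

lemma csum_mem: "(\<And>j. a j \<in> cset (f j)) \<Longrightarrow> (\<Sum>j\<in>UNIV. a j) \<in> cset (csum f)"
  unfolding mem_cset_iff csum_def by (auto simp: Re_sum Im_sum intro!: rsum_mem)

lemma pvec_mem: "x \<in> vset (pvec x)"
  by (simp add: vset_def pvec_def pt_mem)

lemma pmat_mem: "Y \<in> mset (pmat Y)"
  by (simp add: mset_def pmat_def pt_mem)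

lemma vadd_mem: "a \<in> vset I \<Longrightarrow> b \<in> vset J \<Longrightarrow> a + b \<in> vset (vadd I J)"
  by (simp add: vset_def vadd_def cadd_mem)

lemma vsub_mem: "a \<in> vset I \<Longrightarrow> b \<in> vset J \<Longrightarrow> a - b \<in> vset (vsub I J)"
  by (simp add: vset_def vsub_def csub_mem)

lemma msub_mem: "A \<in> mset I \<Longrightarrow> B \<in> mset J \<Longrightarrow> A - B \<in> mset (msub I J)"
  by (simp add: mset_def msub_def csub_mem)

lemma matvec_mem: "B \<in> mset A \<Longrightarrow> v \<in> vset I \<Longrightarrow> B *v v \<in> vset (matvec A I)"
  unfolding vset_def matvec_def matrix_vector_mult_def mset_def
  by (auto simp: mult.commute intro!: csum_mem cmul_mem)

lemma matmul_mem: "B \<in> mset A \<Longrightarrow> C \<in> mset M \<Longrightarrow> B ** C \<in> mset (matmul A M)"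
  unfolding mset_def matmul_def matrix_matrix_mult_def
  by (auto intro!: csum_mem) (metis cmul_mem mult.commute)

lemma krawczyk_mem:
  assumes "Fx \<in> vset (bF (pvec x))" "M \<in> mset (bJ I)" "z \<in> vset I"
  shows "x - Y *v Fx + (mat 1 - Y ** M) *v (z - x) \<in> vset (krawczyk bF bJ x Y I)"
  unfolding krawczyk_def
  by (intro vadd_mem vsub_mem matvec_mem msub_mem matmul_mem pvec_mem pmat_mem assms)

lemma is_civec_pvec: "is_civec (pvec x)"
  unfolding is_civec_def pvec_def pt_def is_cint_def is_rint_def
  by (simp add: atLeastAtMost_singleton[symmetric] del: atLeastAtMost_singleton)

text \<open>Boundedness is needed because \<^const>\<open>inorm_inf\<close> is a supremum, which carries information only
  for sets that are bounded above.\<close>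

definition bounded_cint :: "cint \<Rightarrow> bool" where
  "bounded_cint I \<longleftrightarrow> bounded (fst I) \<and> bounded (snd I)"

lemma bounded_radd:
  assumes "bounded X" "bounded Y"
  shows "bounded (radd X Y)"
proof -
  have "radd X Y = (\<lambda>(x, y). x + y) ` (X \<times> Y)"
    unfolding radd_def by auto
  with bounded_plus[OF assms] show ?thesis
    by simp
qed

lemma bounded_rsub:
  assumes "bounded X" "bounded Y"
  shows "bounded (rsub X Y)"
proof -
  have "rsub X Y = (\<lambda>(x, y). x - y) ` (X \<times> Y)"
    unfolding rsub_def by auto
  with bounded_minus[OF assms] show ?thesis
    by simp
qed

lemma bounded_rmul:
  assumes "bounded X" "bounded Y"
  shows "bounded (rmul X Y)"
proof -
  obtain R S where "\<forall>x\<in>X. \<bar>x\<bar> \<le> R" "\<forall>y\<in>Y. \<bar>y\<bar> \<le> S"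
    using assms unfolding bounded_iff real_norm_def by blast
  then have "\<forall>p\<in>rmul X Y. \<bar>p\<bar> \<le> R * S"
    unfolding rmul_def by (auto simp: abs_mult intro!: mult_mono order.trans[OF abs_ge_zero])
  then show ?thesis
    unfolding bounded_iff real_norm_def by blast
qed

lemma bounded_rsum:
  assumes "\<And>j. bounded (X j)"
  shows "bounded (rsum X)"
proof -
  obtain R where R: "\<And>j. \<forall>x\<in>X j. \<bar>x\<bar> \<le> R j"
    using assms unfolding bounded_iff real_norm_def by metis
  have "\<bar>\<Sum>j\<in>UNIV. x j\<bar> \<le> (\<Sum>j\<in>UNIV. R j)" if "\<forall>j. x j \<in> X j" for x
    using that R by (intro order.trans[OF sum_abs] sum_mono) auto
  then show ?thesis
    unfolding bounded_iff real_norm_def rsum_def by blast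
qed

lemma bounded_cint_if_is_cint: "is_cint I \<Longrightarrow> bounded_cint I"
  unfolding bounded_cint_def is_cint_def is_rint_def by auto

lemma bounded_cint_pt: "bounded_cint (pt c)"
  by (simp add: bounded_cint_def pt_def)

lemma bounded_cint_csub: "bounded_cint I \<Longrightarrow> bounded_cint J \<Longrightarrow> bounded_cint (csub I J)"
  by (simp add: bounded_cint_def csub_def bounded_rsub)

lemma bounded_cint_cmul: "bounded_cint I \<Longrightarrow> bounded_cint J \<Longrightarrow> bounded_cint (cmul I J)"
  by (simp add: bounded_cint_def cmul_def Let_def bounded_rsub bounded_radd bounded_rmul)

lemma bounded_cint_csum: "(\<And>j. bounded_cint (f j)) \<Longrightarrow> bounded_cint (csum f)"
  by (simp add: bounded_cint_def csum_def bounded_rsum)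

lemma bounded_cset:
  assumes "bounded_cint I"
  shows "bounded (cset I)"
proof -
  obtain R S where "\<forall>x\<in>fst I. \<bar>x\<bar> \<le> R" "\<forall>y\<in>snd I. \<bar>y\<bar> \<le> S"
    using assms unfolding bounded_cint_def bounded_iff real_norm_def by blast
  then have "\<forall>z\<in>cset I. cmod z \<le> R + S"
    using cmod_le by (fastforce simp: mem_cset_iff intro: order.trans add_mono)
  then show ?thesis
    unfolding bounded_iff by blast
qed

lemma bounded_cint_krawczyk_matrix:
  "is_cimat J \<Longrightarrow> bounded_cint (msub (pmat (mat 1)) (matmul (pmat Y) J) $ i $ j)"
  unfolding msub_def matmul_def pmat_def is_cimat_def
  by (auto intro!: bounded_cint_csub bounded_cint_pt bounded_cint_csum bounded_cint_cmul
      simp: bounded_cint_if_is_cint)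

section \<open>Infinity norms\<close>

lemma vnorm_inf_ge: "cmod (v$i) \<le> vnorm_inf v"
  unfolding vnorm_inf_def by (rule Max_ge) auto

lemma vnorm_inf_le: "(\<And>i. cmod (v$i) \<le> R) \<Longrightarrow> vnorm_inf v \<le> R"
  unfolding vnorm_inf_def by (subst Max_le_iff) auto

lemma vnorm_inf_nonneg: "0 \<le> vnorm_inf v"
  using vnorm_inf_ge[of v] norm_ge_zero order.trans by blast

lemma vnorm_inf_pos: "v \<noteq> 0 \<Longrightarrow> 0 < vnorm_inf v"
proof -
  assume "v \<noteq> 0"
  then obtain i where "v$i \<noteq> 0"
    by (metis vec_eq_iff zero_index)
  then show ?thesis
    using vnorm_inf_ge[of v i] zero_less_norm_iff[of "v$i"] by linarith
qed

definition entry_norm_sum :: "complex^'n^'m \<Rightarrow> real" where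
  "entry_norm_sum B = (\<Sum>i\<in>UNIV. \<Sum>j\<in>UNIV. cmod (B$i$j))"

lemma vnorm_inf_mult_le_entry_norm_sum: "vnorm_inf (B *v v) \<le> entry_norm_sum B * vnorm_inf v"
proof (rule vnorm_inf_le)
  fix i
  have "cmod ((B *v v)$i) \<le> (\<Sum>j\<in>UNIV. cmod (B$i$j) * cmod (v$j))"
    unfolding matrix_vector_mult_def by (simp add: order.trans[OF norm_sum] norm_mult)
  also have "\<dots> \<le> (\<Sum>j\<in>UNIV. cmod (B$i$j)) * vnorm_inf v"
    by (simp add: sum_distrib_right sum_mono mult_left_mono vnorm_inf_ge)
  also have "\<dots> \<le> entry_norm_sum B * vnorm_inf v"
    unfolding entry_norm_sum_def
    by (intro mult_right_mono vnorm_inf_nonneg member_le_sum) (auto intro: sum_nonneg)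
  finally show "cmod ((B *v v)$i) \<le> entry_norm_sum B * vnorm_inf v" .
qed

lemma opnorm_inf_quotient_bounded:
  fixes B :: "complex^'n^'n"
  shows "vnorm_inf (B *v v) / vnorm_inf v \<le> entry_norm_sum B"
  using vnorm_inf_mult_le_entry_norm_sum[of B v] vnorm_inf_nonneg[of v]
  by (cases "vnorm_inf v = 0") (auto simp: divide_le_eq entry_norm_sum_def sum_nonneg)

lemma opnorm_inf_le_entry_norm_sum:
  fixes B :: "complex^'n^'n"
  shows "opnorm_inf B \<le> entry_norm_sum B"
proof -
  have "(axis undefined 1 :: complex^'n) \<noteq> 0"
    by (simp add: axis_eq_0_iff)
  then show ?thesis
    unfolding opnorm_inf_def by (blast intro: cSup_least opnorm_inf_quotient_bounded)
qed

lemma vnorm_inf_mult_le_opnorm_inf: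
  fixes B :: "complex^'n^'n"
  shows "vnorm_inf (B *v v) \<le> opnorm_inf B * vnorm_inf v"
proof (cases "v = 0")
  case True
  then show ?thesis by (simp add: vnorm_inf_def)
next
  case False
  have "vnorm_inf (B *v v) / vnorm_inf v \<le> opnorm_inf B"
    unfolding opnorm_inf_def
    by (rule cSup_upper) (use False opnorm_inf_quotient_bounded in \<open>auto simp: bdd_above_def\<close>)
  then show ?thesis
    using vnorm_inf_pos[OF False] by (simp add: divide_le_eq)
qed

lemma opnorm_inf_le_inorm_inf:
  assumes "B \<in> mset A" "\<And>i j. bounded_cint (A$i$j)"
  shows "opnorm_inf B \<le> inorm_inf A"
proof -
  obtain R where R: "\<And>i j. \<forall>z\<in>cset (A$i$j). cmod z \<le> R i j"
    using bounded_cset[OF assms(2)] unfolding bounded_iff by metis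
  have "bdd_above {opnorm_inf C | C. C \<in> mset A}"
    unfolding bdd_above_def
  proof (intro exI[of _ "\<Sum>i\<in>UNIV. \<Sum>j\<in>UNIV. R i j"], clarify)
    fix C assume "C \<in> mset A"
    then have "entry_norm_sum C \<le> (\<Sum>i\<in>UNIV. \<Sum>j\<in>UNIV. R i j)"
      unfolding entry_norm_sum_def using R by (intro sum_mono) (auto simp: mset_def)
    then show "opnorm_inf C \<le> (\<Sum>i\<in>UNIV. \<Sum>j\<in>UNIV. R i j)"
      using opnorm_inf_le_entry_norm_sum[of C] by linarith
  qed
  then show ?thesis
    unfolding inorm_inf_def using assms(1) by (auto intro: cSup_upper)
qed

lemma cmod_le_sqrt2_mult:
  assumes "\<bar>Re u\<bar> \<le> r" "\<bar>Im u\<bar> \<le> r"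
  shows "cmod u \<le> sqrt 2 * r"
proof -
  have "(Re u)\<^sup>2 + (Im u)\<^sup>2 \<le> 2 * r\<^sup>2"
    using power_mono[OF assms(1) abs_ge_zero, of 2] power_mono[OF assms(2) abs_ge_zero, of 2] by simp
  then have "cmod u \<le> sqrt (2 * r\<^sup>2)"
    unfolding norm_complex_def by (rule real_sqrt_le_mono)
  also have "\<dots> = sqrt 2 * r"
    using assms by (simp add: real_sqrt_mult)
  finally show ?thesis .
qed

section \<open>Interval vectors as compact convex sets\<close>

lemma vset_eq_Inter:
  "vset I = (\<Inter>i. (\<lambda>z. Re (z$i)) -` fst (I$i) \<inter> (\<lambda>z. Im (z$i)) -` snd (I$i))"
  by (auto simp: vset_def mem_cset_iff)

lemma convex_vset:
  assumes "is_civec I"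
  shows "convex (vset I)"
proof -
  have "convex (fst (I$i))" "convex (snd (I$i))" for i
    using assms unfolding is_civec_def is_cint_def is_rint_def by (metis convex_closed_interval)+
  moreover have "linear (\<lambda>z. Re (z$i))" "linear (\<lambda>z. Im (z$i))" for i
    by (auto intro!: linearI simp: algebra_simps)
  ultimately show ?thesis
    unfolding vset_eq_Inter by (intro convex_INT ballI convex_Int convex_linear_vimage)
qed

lemma compact_vset:
  assumes "is_civec I"
  shows "compact (vset I)"
proof -
  have "closed (fst (I$i))" "closed (snd (I$i))" for i
    using assms unfolding is_civec_def is_cint_def is_rint_def by (metis closed_atLeastAtMost)+
  then have "closed (vset I)"
    unfolding vset_eq_Inter
    by (intro closed_INT ballI closed_Int continuous_closed_vimage continuous_intros)
  moreover
  have "\<forall>i. \<exists>r. \<forall>z\<in>cset (I$i). cmod z \<le> r"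
    using assms bounded_cset bounded_cint_if_is_cint unfolding is_civec_def bounded_iff by blast
  then obtain R where R: "\<And>i. \<forall>z\<in>cset (I$i). cmod z \<le> R i"
    by metis
  have "\<forall>z\<in>vset I. norm z \<le> (\<Sum>i\<in>UNIV. R i)"
    using R unfolding norm_vec_def by (auto simp: vset_def intro!: order.trans[OF L2_set_le_sum] sum_mono)
  then have "bounded (vset I)"
    unfolding bounded_iff by blast
  ultimately show ?thesis
    using compact_eq_bounded_closed by blast
qed

lemma vset_segment:
  assumes "is_civec I" "a \<in> vset I" "b \<in> vset I" "0 \<le> s" "s \<le> 1"
  shows "a + s *\<^sub>R (b - a) \<in> vset I"
proof -
  have "a + s *\<^sub>R (b - a) = (1 - s) *\<^sub>R a + s *\<^sub>R b"
    by (simp add: algebra_simps)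
  then show ?thesis
    using convex_vset[OF assms(1)] assms(2-5) by (simp add: convexD)
qed

section \<open>Polynomial maps and the mean value theorem\<close>

definition poly_fun :: "('n \<Rightarrow> nat) set \<Rightarrow> (('n \<Rightarrow> nat) \<Rightarrow> real) \<Rightarrow> complex^'n \<Rightarrow> complex" where
  "poly_fun S c z = (\<Sum>\<alpha>\<in>S. of_real (c \<alpha>) * (\<Prod>j\<in>UNIV. (z$j) ^ (\<alpha> j)))"

definition poly_pderiv ::
  "('n::finite \<Rightarrow> nat) set \<Rightarrow> (('n \<Rightarrow> nat) \<Rightarrow> real) \<Rightarrow> 'n \<Rightarrow> complex^'n \<Rightarrow> complex" where
  "poly_pderiv S c l z = (\<Sum>\<alpha>\<in>S. of_real (c \<alpha>) *
     (of_nat (\<alpha> l) * (z$l) ^ (\<alpha> l - 1) * (\<Prod>j\<in>UNIV-{l}. (z$j) ^ (\<alpha> j))))"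

text \<open>Unlike \<^const>\<open>real_poly_system\<close>, no finiteness of the supports is required: nothing
  below depends on it.\<close>

definition poly_map ::
  "('m \<Rightarrow> ('n \<Rightarrow> nat) set) \<Rightarrow> ('m \<Rightarrow> ('n \<Rightarrow> nat) \<Rightarrow> real) \<Rightarrow> complex^'n \<Rightarrow> complex^'m" where
  "poly_map S c z = (\<chi> k. poly_fun (S k) (c k) z)"

lemma poly_map_nth [simp]: "poly_map S c z $ k = poly_fun (S k) (c k) z"
  by (simp add: poly_map_def)

lemma real_poly_system_imp_poly_map: "real_poly_system F \<Longrightarrow> \<exists>S c. F = poly_map S c"
  unfolding real_poly_system_def poly_map_def poly_fun_def
  by (metis (no_types, lifting) ext vec_lambda_unique)

lemma poly_map_cnj: "poly_map S c (\<chi> i. cnj (z$i)) = (\<chi> k. cnj (poly_map S c z $ k))"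
  by (simp add: vec_eq_iff poly_fun_def cnj_sum cnj_prod)

lemma has_derivative_poly_fun_comp:
  fixes p :: "'a::real_normed_vector \<Rightarrow> complex^'n::finite"
  assumes "\<And>j. ((\<lambda>t. p t $ j) has_derivative p' j) (at t within T)"
  shows "((\<lambda>t. poly_fun S c (p t)) has_derivative
           (\<lambda>s. \<Sum>l\<in>UNIV. poly_pderiv S c l (p t) * p' l s)) (at t within T)"
proof -
  have "((\<lambda>t. poly_fun S c (p t)) has_derivative
     (\<lambda>s. \<Sum>\<alpha>\<in>S. of_real (c \<alpha>) * (\<Sum>l\<in>UNIV. (of_nat (\<alpha> l) * p' l s * (p t $ l)^(\<alpha> l - 1)) *
        (\<Prod>j\<in>UNIV-{l}. (p t $ j)^\<alpha> j)))) (at t within T)"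
    unfolding poly_fun_def
    by (intro has_derivative_sum has_derivative_mult_right has_derivative_prod has_derivative_power assms)
  then show ?thesis
    unfolding poly_pderiv_def
    by (rule has_derivative_eq_rhs)
      (simp add: fun_eq_iff sum_distrib_left sum_distrib_right sum.swap[of _ S] mult_ac)
qed

lemma jac_poly_map: "jac (poly_map S c) z $ k $ l = poly_pderiv (S k) (c k) l z"
proof -
  have "((\<lambda>t. poly_fun (S k) (c k) (z + t *s axis l 1)) has_derivative
          (\<lambda>s. \<Sum>m\<in>UNIV. poly_pderiv (S k) (c k) m (z + 0 *s axis l 1) * (s * axis l 1 $ m))) (at 0)"
    by (rule has_derivative_poly_fun_comp) (auto intro!: derivative_eq_intros)
  then have "((\<lambda>t. poly_fun (S k) (c k) (z + t *s axis l 1)) has_field_derivative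
               poly_pderiv (S k) (c k) l z) (at 0)"
    unfolding has_field_derivative_def
    by (rule has_derivative_eq_rhs) (simp add: fun_eq_iff axis_def if_distrib mult.commute cong: if_cong)
  then show ?thesis
    unfolding jac_def by (simp add: DERIV_imp_deriv)
qed

lemma has_derivative_poly_map_nth:
  "((\<lambda>w. poly_map S c w $ k) has_derivative (\<lambda>h. (jac (poly_map S c) z *v h) $ k)) (at z)"
  using has_derivative_poly_fun_comp[of "\<lambda>w. w" "\<lambda>j h. h $ j" z UNIV "S k" "c k"]
  by (simp add: bounded_linear.has_derivative[OF bounded_linear_vec_nth] has_derivative_ident
      matrix_vector_mult_def jac_poly_map)

lemma mean_value_functional_row:
  fixes F :: "complex^'n \<Rightarrow> complex^'m" and L :: "complex \<Rightarrow> real"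
  assumes F': "\<And>z k. ((\<lambda>w. F w $ k) has_derivative (\<lambda>h. (J z *v h) $ k)) (at z)"
    and L: "bounded_linear L"
  shows "\<exists>s. 0 < s \<and> s < 1 \<and>
           L ((Y *v (F b - F a)) $ i) = L (((Y ** J (a + s *\<^sub>R (b - a))) *v (b - a)) $ i)"
proof -
  define h where "h = b - a"
  define \<Phi> where "\<Phi> t = L ((Y *v F (a + t *\<^sub>R h)) $ i)" for t :: real
  have der: "(\<Phi> has_real_derivative L (((Y ** J (a + t *\<^sub>R h)) *v h) $ i)) (at t)" for t
  proof -
    let ?J = "J (a + t *\<^sub>R h)"
    have "((\<lambda>t. F (a + t *\<^sub>R h) $ k) has_derivative (\<lambda>s. (?J *v (s *\<^sub>R h)) $ k)) (at t)" for k
      by (rule has_derivative_compose[OF _ F']) (auto intro!: derivative_eq_intros)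
    then have "(\<Phi> has_derivative (\<lambda>s. L (\<Sum>k\<in>UNIV. Y$i$k * (?J *v (s *\<^sub>R h)) $ k))) (at t)"
      unfolding \<Phi>_def matrix_vector_mult_def[of Y] vec_lambda_beta
      by (intro bounded_linear.has_derivative[OF L] has_derivative_sum has_derivative_mult_right)
    moreover have "(\<Sum>k\<in>UNIV. Y$i$k * (?J *v (s *\<^sub>R h)) $ k) = s *\<^sub>R (((Y ** ?J) *v h) $ i)"
      for s
    proof -
      have "(\<Sum>k\<in>UNIV. Y$i$k * (?J *v (s *\<^sub>R h)) $ k) = (Y *v (?J *v (s *\<^sub>R h))) $ i"
        by (simp add: matrix_vector_mult_def)
      also have "\<dots> = s *\<^sub>R (((Y ** ?J) *v h) $ i)"
        by (simp add: matrix_vector_mul_assoc) (simp add: matrix_vector_mult_def scaleR_sum_right)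
      finally show ?thesis .
    qed
    ultimately show ?thesis
      unfolding has_field_derivative_def
      by (simp add: linear_scale[OF bounded_linear.linear[OF L]] mult.commute[of _ "L _"])
  qed
  obtain s where "0 < s" "s < 1" "\<Phi> 1 - \<Phi> 0 = L (((Y ** J (a + s *\<^sub>R h)) *v h) $ i)"
    using MVT2[of 0 1 \<Phi>, OF _ der] by auto
  moreover have "\<Phi> 1 - \<Phi> 0 = L ((Y *v (F b - F a)) $ i)"
    unfolding \<Phi>_def h_def
    by (simp add: linear_diff[OF bounded_linear.linear[OF L], symmetric] matrix_vector_mult_diff_distrib)
  ultimately show ?thesis
    unfolding h_def by auto
qed

lemma mean_value_jac_enclosure:
  fixes F :: "complex^'n \<Rightarrow> complex^'m" and L :: "complex \<Rightarrow> real"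
  assumes "\<And>z k. ((\<lambda>w. F w $ k) has_derivative (\<lambda>h. (J z *v h) $ k)) (at z)"
    and "bounded_linear L" and "is_mat_enclosure bJ J" and "is_civec I"
    and "a \<in> vset I" and "b \<in> vset I"
  shows "\<exists>M \<in> mset (bJ I). L ((Y *v (F b - F a)) $ i) = L (((Y ** M) *v (b - a)) $ i)"
proof -
  obtain s where s: "0 < s" "s < 1"
    "L ((Y *v (F b - F a)) $ i) = L (((Y ** J (a + s *\<^sub>R (b - a))) *v (b - a)) $ i)"
    using mean_value_functional_row[OF assms(1,2)] by blast
  have "a + s *\<^sub>R (b - a) \<in> vset I"
    using vset_segment[OF assms(4-6)] s by auto
  then have "J (a + s *\<^sub>R (b - a)) \<in> mset (bJ I)"
    using assms(3,4) unfolding is_mat_enclosure_def by blast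
  with s(3) show ?thesis by blast
qed

section \<open>The Krawczyk operator\<close>

lemma krawczyk_attains_functional_of_newton_step:
  fixes F :: "complex^'n \<Rightarrow> complex^'n" and L :: "complex \<Rightarrow> real"
  assumes F': "\<And>z k. ((\<lambda>w. F w $ k) has_derivative (\<lambda>h. (J z *v h) $ k)) (at z)"
    and L: "bounded_linear L"
    and "is_enclosure bF F" and "is_mat_enclosure bJ J" and "is_civec I"
    and "x \<in> vset I" and "z \<in> vset I"
  shows "\<exists>w\<in>vset (krawczyk bF bJ x Y I). L (w$i) = L ((z - Y *v F z) $ i)"
proof -
  obtain M where M: "M \<in> mset (bJ I)" "L ((Y *v (F z - F x)) $ i) = L (((Y ** M) *v (z - x)) $ i)"
    using mean_value_jac_enclosure[OF F' L assms(4-7)] by blast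
  define w where "w = x - Y *v F x + (mat 1 - Y ** M) *v (z - x)"
  have "F x \<in> vset (bF (pvec x))"
    using assms(3) is_civec_pvec pvec_mem unfolding is_enclosure_def by blast
  then have "w \<in> vset (krawczyk bF bJ x Y I)"
    unfolding w_def using M(1) assms(7) by (rule krawczyk_mem)
  moreover have "w - (z - Y *v F z) = Y *v (F z - F x) - (Y ** M) *v (z - x)"
    unfolding w_def
    by (simp add: matrix_vector_mult_diff_rdistrib matrix_vector_mult_diff_distrib algebra_simps)
  then have "L (w$i) - L ((z - Y *v F z) $ i) = L ((Y *v (F z - F x)) $ i) - L (((Y ** M) *v (z - x)) $ i)"
    by (metis linear_diff[OF bounded_linear.linear[OF L]] vector_minus_component)
  ultimately show ?thesis
    using M(2) by auto
qed

lemma newton_step_in_krawczyk: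
  fixes F :: "complex^'n \<Rightarrow> complex^'n"
  assumes "\<And>z k. ((\<lambda>w. F w $ k) has_derivative (\<lambda>h. (J z *v h) $ k)) (at z)"
    and "is_enclosure bF F" and "is_mat_enclosure bJ J" and "is_civec I"
    and "x \<in> vset I" and "z \<in> vset I"
  shows "z - Y *v F z \<in> vset (krawczyk bF bJ x Y I)"
proof -
  have "(z - Y *v F z) $ i \<in> cset (krawczyk bF bJ x Y I $ i)" for i
  proof -
    obtain w1 where w1: "w1 \<in> vset (krawczyk bF bJ x Y I)" "Re (w1$i) = Re ((z - Y *v F z) $ i)"
      using krawczyk_attains_functional_of_newton_step[OF assms(1) bounded_linear_Re assms(2-6)]
      by blast
    obtain w2 where w2: "w2 \<in> vset (krawczyk bF bJ x Y I)" "Im (w2$i) = Im ((z - Y *v F z) $ i)"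
      using krawczyk_attains_functional_of_newton_step[OF assms(1) bounded_linear_Im assms(2-6)]
      by blast
    have "Re (w1$i) \<in> fst (krawczyk bF bJ x Y I $ i)" "Im (w2$i) \<in> snd (krawczyk bF bJ x Y I $ i)"
      using w1(1) w2(1) by (auto simp: vset_def mem_cset_iff)
    then show ?thesis
      using w1(2) w2(2) by (simp add: mem_cset_iff)
  qed
  then show ?thesis
    by (simp add: vset_def)
qed

lemma krawczyk_contains_zero:
  fixes F :: "complex^'n \<Rightarrow> complex^'n"
  assumes F': "\<And>z k. ((\<lambda>w. F w $ k) has_derivative (\<lambda>h. (J z *v h) $ k)) (at z)"
    and "is_enclosure bF F" and "is_mat_enclosure bJ J" and I: "is_civec I"
    and "x \<in> vset I" and "invertible Y" and KI: "vset (krawczyk bF bJ x Y I) \<subseteq> vset I"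
  shows "\<exists>z\<in>vset (krawczyk bF bJ x Y I). F z = 0"
proof -
  define g where "g z = z - Y *v F z" for z
  have gK: "g z \<in> vset (krawczyk bF bJ x Y I)" if "z \<in> vset I" for z
    unfolding g_def using newton_step_in_krawczyk[OF assms(1-5) that] .
  have "continuous_on (vset I) (\<lambda>w. F w $ k)" for k
    using F' by (blast intro: continuous_at_imp_continuous_on has_derivative_continuous)
  then have "continuous_on (vset I) F"
    using continuous_on_vec_lambda[of "vset I" "\<lambda>k w. F w $ k"] by simp
  then have "continuous_on (vset I) (\<lambda>z. \<chi> i. z$i - (\<Sum>k\<in>UNIV. Y$i$k * F z $ k))"
    by (intro continuous_on_vec_lambda continuous_intros)
  moreover have "g = (\<lambda>z. \<chi> i. z$i - (\<Sum>k\<in>UNIV. Y$i$k * F z $ k))"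
    by (simp add: fun_eq_iff vec_eq_iff g_def matrix_vector_mult_def)
  ultimately have "continuous_on (vset I) g"
    by simp
  then obtain z where z: "z \<in> vset I" "g z = z"
    using brouwer[OF compact_vset[OF I] convex_vset[OF I]] gK KI assms(5) by blast
  have "F z = 0"
  proof -
    have "\<exists>B. B ** Y = mat 1"
      using assms(6) unfolding invertible_def by blast
    moreover have "Y *v F z = 0"
      using z(2) unfolding g_def by simp
    ultimately show ?thesis
      using matrix_left_invertible_ker by blast
  qed
  with z gK show ?thesis
    by metis
qed

lemma newton_step_functional_bound:
  fixes F :: "complex^'n \<Rightarrow> complex^'n" and L :: "complex \<Rightarrow> real"
  assumes F': "\<And>z k. ((\<lambda>w. F w $ k) has_derivative (\<lambda>h. (J z *v h) $ k)) (at z)"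
    and L: "bounded_linear L" and L_le: "\<And>u. \<bar>L u\<bar> \<le> cmod u"
    and enc: "is_mat_enclosure bJ J" and I: "is_civec I"
    and "a \<in> vset I" and "b \<in> vset I"
  shows "\<bar>L (((b - Y *v F b) - (a - Y *v F a)) $ i)\<bar>
           \<le> inorm_inf (msub (pmat (mat 1)) (matmul (pmat Y) (bJ I))) * vnorm_inf (b - a)"
proof -
  obtain M where M: "M \<in> mset (bJ I)" "L ((Y *v (F b - F a)) $ i) = L (((Y ** M) *v (b - a)) $ i)"
    using mean_value_jac_enclosure[OF F' L enc I assms(6,7)] by blast
  have lin: "linear L"
    using L by (rule bounded_linear.linear)
  have "((b - Y *v F b) - (a - Y *v F a)) $ i = (b - a) $ i - (Y *v (F b - F a)) $ i"
    by (simp add: matrix_vector_mult_diff_distrib)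
  then have "L (((b - Y *v F b) - (a - Y *v F a)) $ i) = L ((b - a) $ i) - L (((Y ** M) *v (b - a)) $ i)"
    by (simp only: linear_diff[OF lin] M(2))
  also have "\<dots> = L (((mat 1 - Y ** M) *v (b - a)) $ i)"
    by (simp add: matrix_vector_mult_diff_rdistrib linear_diff[OF lin])
  also have "\<bar>\<dots>\<bar> \<le> vnorm_inf ((mat 1 - Y ** M) *v (b - a))"
    using L_le vnorm_inf_ge order.trans by blast
  also have "\<dots> \<le> opnorm_inf (mat 1 - Y ** M) * vnorm_inf (b - a)"
    by (rule vnorm_inf_mult_le_opnorm_inf)
  also have "\<dots> \<le> inorm_inf (msub (pmat (mat 1)) (matmul (pmat Y) (bJ I))) * vnorm_inf (b - a)"
  proof (intro mult_right_mono vnorm_inf_nonneg opnorm_inf_le_inorm_inf)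
    show "mat 1 - Y ** M \<in> mset (msub (pmat (mat 1)) (matmul (pmat Y) (bJ I)))"
      by (intro msub_mem matmul_mem pmat_mem M(1))
    show "bounded_cint (msub (pmat (mat 1)) (matmul (pmat Y) (bJ I)) $ k $ l)" for k l
      using enc I unfolding is_mat_enclosure_def by (blast intro: bounded_cint_krawczyk_matrix)
  qed
  finally show ?thesis .
qed

lemma newton_step_contraction:
  fixes F :: "complex^'n \<Rightarrow> complex^'n"
  assumes "\<And>z k. ((\<lambda>w. F w $ k) has_derivative (\<lambda>h. (J z *v h) $ k)) (at z)"
    and "is_mat_enclosure bJ J" and "is_civec I" and "a \<in> vset I" and "b \<in> vset I"
  shows "vnorm_inf ((b - Y *v F b) - (a - Y *v F a))
           \<le> sqrt 2 * inorm_inf (msub (pmat (mat 1)) (matmul (pmat Y) (bJ I))) * vnorm_inf (b - a)"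
  unfolding mult.assoc
  by (intro vnorm_inf_le cmod_le_sqrt2_mult newton_step_functional_bound[OF assms(1) _ _ assms(2-5)])
    (auto simp: bounded_linear_Re bounded_linear_Im abs_Re_le_cmod abs_Im_le_cmod)

lemma krawczyk_zero_unique:
  fixes F :: "complex^'n \<Rightarrow> complex^'n"
  assumes "\<And>z k. ((\<lambda>w. F w $ k) has_derivative (\<lambda>h. (J z *v h) $ k)) (at z)"
    and "is_mat_enclosure bJ J" and "is_civec I"
    and q: "sqrt 2 * inorm_inf (msub (pmat (mat 1)) (matmul (pmat Y) (bJ I))) < 1"
    and "z \<in> vset I" and "w \<in> vset I" and "F z = 0" and "F w = 0"
  shows "w = z"
proof (rule ccontr)
  assume "w \<noteq> z"
  then have pos: "0 < vnorm_inf (w - z)"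
    by (simp add: vnorm_inf_pos)
  have "vnorm_inf (w - z)
          \<le> sqrt 2 * inorm_inf (msub (pmat (mat 1)) (matmul (pmat Y) (bJ I))) * vnorm_inf (w - z)"
    using newton_step_contraction[OF assms(1-3,5,6), of Y] assms(7,8) by simp
  also have "\<dots> < vnorm_inf (w - z)"
    using mult_strict_right_mono[OF q pos] by simp
  finally show False
    by simp
qed

theorem lemma4p11:
  fixes F :: "complex^'n \<Rightarrow> complex^'n"
    and bF :: "cint^'n \<Rightarrow> cint^'n"
    and bJ :: "cint^'n \<Rightarrow> cint^'n^'n"
    and I :: "cint^'n"
  assumes "real_poly_system F"
    and "is_enclosure bF F"
    and "is_mat_enclosure bJ (jac F)"
    and "strong_iaz bF bJ I"
  shows "(\<exists>x Y. x \<in> vset I \<and> invertible Y \<and>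
            vset (krawczyk bF bJ x Y I) \<subseteq> vset I \<and>
            sqrt 2 * inorm_inf (msub (pmat (mat 1)) (matmul (pmat Y) (bJ I))) < 1)
    \<and> (\<forall>x Y. x \<in> vset I \<and> invertible Y \<and>
            vset (krawczyk bF bJ x Y I) \<subseteq> vset I \<and>
            sqrt 2 * inorm_inf (msub (pmat (mat 1)) (matmul (pmat Y) (bJ I))) < 1 \<and>
            (\<lambda>z. \<chi> i. cnj (z$i)) ` vset (krawczyk bF bJ x Y I) \<subseteq> vset I
          \<longrightarrow> (\<exists>z. z \<in> vset I \<and> F z = 0 \<and> (\<forall>w\<in>vset I. F w = 0 \<longrightarrow> w = z)
                   \<and> (\<forall>i. z$i \<in> \<real>)))"
proof (intro conjI allI impI)
  obtain S c where F: "F = poly_map S c"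
    using assms(1) real_poly_system_imp_poly_map by blast
  have F': "((\<lambda>w. F w $ k) has_derivative (\<lambda>h. (jac F z *v h) $ k)) (at z)" for z k
    unfolding F by (rule has_derivative_poly_map_nth)
  have I: "is_civec I"
    using assms(4) unfolding strong_iaz_def by blast
  show "\<exists>x Y. x \<in> vset I \<and> invertible Y \<and> vset (krawczyk bF bJ x Y I) \<subseteq> vset I \<and>
          sqrt 2 * inorm_inf (msub (pmat (mat 1)) (matmul (pmat Y) (bJ I))) < 1"
    using assms(4) unfolding strong_iaz_def by blast
  fix x Y
  assume H: "x \<in> vset I \<and> invertible Y \<and> vset (krawczyk bF bJ x Y I) \<subseteq> vset I \<and>
    sqrt 2 * inorm_inf (msub (pmat (mat 1)) (matmul (pmat Y) (bJ I))) < 1 \<and>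
    (\<lambda>z. \<chi> i. cnj (z$i)) ` vset (krawczyk bF bJ x Y I) \<subseteq> vset I"
  then obtain z where zK: "z \<in> vset (krawczyk bF bJ x Y I)" and "F z = 0"
    using krawczyk_contains_zero[OF F' assms(2,3) I] by blast
  have zI: "z \<in> vset I"
    using zK H by blast
  have unique: "\<forall>w\<in>vset I. F w = 0 \<longrightarrow> w = z"
    using krawczyk_zero_unique[OF F' assms(3) I _ zI] H \<open>F z = 0\<close> by blast
  have "(\<chi> i. cnj (z$i)) \<in> vset I"
    using zK H by blast
  moreover have "F (\<chi> i. cnj (z$i)) = 0"
    using \<open>F z = 0\<close> unfolding F poly_map_cnj by (simp add: vec_eq_iff)
  ultimately have "(\<chi> i. cnj (z$i)) = z"
    using unique by blast
  then have "\<forall>i. z$i \<in> \<real>"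
    by (simp add: vec_eq_iff Reals_cnj_iff)
  with zI \<open>F z = 0\<close> unique
  show "\<exists>z. z \<in> vset I \<and> F z = 0 \<and> (\<forall>w\<in>vset I. F w = 0 \<longrightarrow> w = z) \<and> (\<forall>i. z$i \<in> \<real>)"
    by blast
qed

end
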